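(* Let $J=JCK(Z,\delta)$ and let $\mathcal K(J)=CK(Z,\delta)$ be its Tits-Kantor-Koecher Lie superalgebra. Then $\dim_{\mathbb F}\mathcal K(J)=4\dim_{\mathbb F}J=32\dim_{\mathbb F}Z$, and $\dim_{\mathbb F}\mathcal K(J)_{\bar0}=\dim_{\mathbb F}\mathcal K(J)_{\bar1}=4\dim_{\mathbb F}J_{\bar0}=4\dim_{\mathbb F}J_{\bar1}=16\dim_{\mathbb F}Z$ (dimensions as cardinals).
   Context: Let $\mathbb F$ be a field of characteristic $\neq 2$, $Z$ a unital commutative associative $\mathbb F$-algebra, and $\delta$ a derivation of $Z$ such that $Z\delta(Z)=Z$ (the $\mathbb F$-span of all products $f\delta(g)$, $f,g\in Z$, is $Z$). The Cheng-Kac Jordan superalgebra $J=JCK(Z,\delta)=J_{\bar0}\oplus J_{\bar1}$ is defined as follows: $J_{\bar0}=Z1\oplus Zw_1\oplus Zw_2\oplus Zw_3$ and $J_{\bar1}=Zx\oplus Zx_1\oplus Zx_2\oplus Zx_3$ are free $Z$-modules of rank 4; $J_{\bar0}$ is the $Z$-algebra $(\mathbb F1\oplus\mathbb Fw_1\oplus\mathbb Fw_2\oplus\mathbb Fw_3)\otimes_{\mathbb F}Z$ with $1$ the identity, $w_1^2=w_2^2=1$, $w_3^2=-1$, $w_iw_j=0$ for $i\ne j$. For $f,g\in Z$ and $i,j\in\{1,2,3\}$ the remaining products are: $f(gx)=(fg)x$, $f(gx_j)=(fg)x_j$, $(fw_i)(gx)=(\delta(f)g)x_i$, $(fw_i)(gx_j)=-(fg)x_{i\times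 j}$, $(fx)(gx)=\delta(f)g-f\delta(g)$, $(fx)(gx_j)=-(fg)w_j$, $(fx_i)(gx)=(fg)w_i$, $(fx_i)(gx_j)=0$, extended by supercommutativity ($ab=(-1)^{|a||b|}ba$), where $x_{1\times2}=-x_{2\times1}=x_3$, $x_{1\times3}=-x_{3\times1}=x_2$, $x_{3\times2}=-x_{2\times3}=x_1$, $x_{i\times i}=0$. $D(a,b)$ is $c\mapsto a(bc)-(-1)^{|a||b|}b(ac)$ and $\mathrm{Inder}(J)$ is their span. The Tits-Kantor-Koecher Lie superalgebra $\mathcal K(J)=\mathcal L_{-1}\oplus\mathcal L_0\oplus\mathcal L_1$: $\mathcal L_{\pm1}$ are copies of $J$ (element $a\in J$ written $a_{\pm1}$), $\mathcal L_0=L_J\oplus\mathrm{Inder}(J)\subseteq\mathfrak{gl}(J)$ where $L_a$ is left multiplication by $a$, with brackets $[a_1,b_{-1}]=L_{ab}+D(a,b)$, $[L_c,a_{\pm1}]=\pm(ca)_{\pm1}$, $[d,a_{\pm1}]=d(a)_{\pm1}$ for $d\in\mathrm{Inder}(J)$, $[a_1,b_1]=[a_{-1},b_{-1}]=0$, and $\mathcal L_0$ a subalgebra of $\mathfrak{gl}(J)$; parities are inherited from $J$ and $\mathfrak{gl}(J)$. *)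

theory Defs
  imports Main HOL.Vector_Spaces "HOL-Library.Function_Algebras" "HOL-Library.Product_Plus"
          "HOL-Library.Equipollence"
begin

text \<open>Index of the free Z-basis 1, w1, w2, w3 (even), x, x1, x2, x3 (odd).
  An element of J is a function from indices to Z (its coordinates).\<close>

datatype jidx = One | W1 | W2 | W3 | X | X1 | X2 | X3

definition jall :: "jidx list" where
  "jall = [One, W1, W2, W3, X, X1, X2, X3]"

fun jodd :: "jidx \<Rightarrow> bool" where
  "jodd One = False" | "jodd W1 = False" | "jodd W2 = False" | "jodd W3 = False"
| "jodd X = True" | "jodd X1 = True" | "jodd X2 = True" | "jodd X3 = True"

definition jsing :: "jidx \<Rightarrow> 'z::zero \<Rightarrow> jidx \<Rightarrow> 'z" where
  "jsing i z = (\<lambda>k. if k = i then z else 0)"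

text \<open>Product (f e_i)(g e_j) of two basis-coordinate elements, following the table
  (with x_{1x2}=x3, x_{2x1}=-x3, x_{1x3}=x2, x_{3x1}=-x2, x_{3x2}=x1, x_{2x3}=-x1),
  and the remaining products obtained by supercommutativity.\<close>
fun ckp :: "('z::comm_ring_1 \<Rightarrow> 'z) \<Rightarrow> jidx \<Rightarrow> jidx \<Rightarrow> 'z \<Rightarrow> 'z \<Rightarrow> jidx \<Rightarrow> 'z" where
  "ckp d One j f g = jsing j (f * g)"
| "ckp d i One f g = jsing i (f * g)"
| "ckp d W1 W1 f g = jsing One (f * g)"
| "ckp d W2 W2 f g = jsing One (f * g)"
| "ckp d W3 W3 f g = jsing One (- (f * g))"
| "ckp d W1 X f g = jsing X1 (d f * g)"
| "ckp d W2 X f g = jsing X2 (d f * g)"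
| "ckp d W3 X f g = jsing X3 (d f * g)"
| "ckp d X W1 f g = jsing X1 (d g * f)"
| "ckp d X W2 f g = jsing X2 (d g * f)"
| "ckp d X W3 f g = jsing X3 (d g * f)"
| "ckp d W1 X2 f g = jsing X3 (- (f * g))"
| "ckp d W2 X1 f g = jsing X3 (f * g)"
| "ckp d W1 X3 f g = jsing X2 (- (f * g))"
| "ckp d W3 X1 f g = jsing X2 (f * g)"
| "ckp d W3 X2 f g = jsing X1 (- (f * g))"
| "ckp d W2 X3 f g = jsing X1 (f * g)"
| "ckp d X2 W1 f g = jsing X3 (- (g * f))"
| "ckp d X1 W2 f g = jsing X3 (g * f)"
| "ckp d X3 W1 f g = jsing X2 (- (g * f))"
| "ckp d X1 W3 f g = jsing X2 (g * f)"
| "ckp d X2 W3 f g = jsing X1 (- (g * f))"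
| "ckp d X3 W2 f g = jsing X1 (g * f)"
| "ckp d X X f g = jsing One (d f * g - f * d g)"
| "ckp d X X1 f g = jsing W1 (- (f * g))"
| "ckp d X X2 f g = jsing W2 (- (f * g))"
| "ckp d X X3 f g = jsing W3 (- (f * g))"
| "ckp d X1 X f g = jsing W1 (f * g)"
| "ckp d X2 X f g = jsing W2 (f * g)"
| "ckp d X3 X f g = jsing W3 (f * g)"
| "ckp d i j f g = 0"

definition jmul :: "('z::comm_ring_1 \<Rightarrow> 'z) \<Rightarrow> (jidx \<Rightarrow> 'z) \<Rightarrow> (jidx \<Rightarrow> 'z) \<Rightarrow> (jidx \<Rightarrow> 'z)" where
  "jmul d a b = (\<Sum>i\<in>set jall. \<Sum>j\<in>set jall. ckp d i j (a i) (b j))"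

definition sJ :: "('f \<Rightarrow> 'z \<Rightarrow> 'z) \<Rightarrow> 'f \<Rightarrow> (jidx \<Rightarrow> 'z) \<Rightarrow> (jidx \<Rightarrow> 'z)" where
  "sJ smul c a = (\<lambda>i. smul c (a i))"

definition sG :: "('f \<Rightarrow> 'z \<Rightarrow> 'z) \<Rightarrow> 'f \<Rightarrow> ((jidx \<Rightarrow> 'z) \<Rightarrow> (jidx \<Rightarrow> 'z))
                  \<Rightarrow> ((jidx \<Rightarrow> 'z) \<Rightarrow> (jidx \<Rightarrow> 'z))" where
  "sG smul c \<phi> = (\<lambda>a. sJ smul c (\<phi> a))"

definition sK :: "('f \<Rightarrow> 'z \<Rightarrow> 'z) \<Rightarrow> 'f
     \<Rightarrow> (jidx \<Rightarrow> 'z) \<times> ((jidx \<Rightarrow> 'z) \<Rightarrow> (jidx \<Rightarrow> 'z)) \<times> (jidx \<Rightarrow> 'z)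
     \<Rightarrow> (jidx \<Rightarrow> 'z) \<times> ((jidx \<Rightarrow> 'z) \<Rightarrow> (jidx \<Rightarrow> 'z)) \<times> (jidx \<Rightarrow> 'z)" where
  "sK smul c v = (case v of (a, \<phi>, b) \<Rightarrow> (sJ smul c a, sG smul c \<phi>, sJ smul c b))"

definition jhom :: "bool \<Rightarrow> (jidx \<Rightarrow> 'z::zero) \<Rightarrow> bool" where
  "jhom p a \<longleftrightarrow> (\<forall>i. jodd i \<noteq> p \<longrightarrow> a i = 0)"

definition Jpart :: "bool \<Rightarrow> (jidx \<Rightarrow> 'z::zero) set" where
  "Jpart p = {a. jhom p a}"

definition glpart :: "bool \<Rightarrow> ((jidx \<Rightarrow> 'z::zero) \<Rightarrow> (jidx \<Rightarrow> 'z)) set" where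
  "glpart p = {\<phi>. \<forall>q a. jhom q a \<longrightarrow> jhom (q \<noteq> p) (\<phi> a)}"

definition Dop :: "('z::comm_ring_1 \<Rightarrow> 'z) \<Rightarrow> bool \<Rightarrow> (jidx \<Rightarrow> 'z) \<Rightarrow> (jidx \<Rightarrow> 'z)
                   \<Rightarrow> (jidx \<Rightarrow> 'z) \<Rightarrow> (jidx \<Rightarrow> 'z)" where
  "Dop d s a b = (\<lambda>c. jmul d a (jmul d b c)
                   - (if s then (-1) else 1) * jmul d b (jmul d a c))"

text \<open>L_0 = L_J + Inder(J), the F-span in gl(J) of all L_a and all D(a,b), a,b homogeneous.\<close>
definition L0 :: "('f::field \<Rightarrow> 'z::comm_ring_1 \<Rightarrow> 'z) \<Rightarrow> ('z \<Rightarrow> 'z)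
                  \<Rightarrow> ((jidx \<Rightarrow> 'z) \<Rightarrow> (jidx \<Rightarrow> 'z)) set" where
  "L0 smul d = Modules.module.span (sG smul)
     ({jmul d a | a. True} \<union> {Dop d (p \<and> q) a b | p q a b. jhom p a \<and> jhom q b})"

text \<open>K(J) = L_{-1} + L_0 + L_1, realised as J x L_0 x J; and its parity-p part.\<close>
definition KJ :: "('f::field \<Rightarrow> 'z::comm_ring_1 \<Rightarrow> 'z) \<Rightarrow> ('z \<Rightarrow> 'z)
     \<Rightarrow> ((jidx \<Rightarrow> 'z) \<times> ((jidx \<Rightarrow> 'z) \<Rightarrow> (jidx \<Rightarrow> 'z)) \<times> (jidx \<Rightarrow> 'z)) set" where
  "KJ smul d = UNIV \<times> L0 smul d \<times> UNIV"

definition KJpart :: "('f::field \<Rightarrow> 'z::comm_ring_1 \<Rightarrow> 'z) \<Rightarrow> ('z \<Rightarrow> 'z) \<Rightarrow> bool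
     \<Rightarrow> ((jidx \<Rightarrow> 'z) \<times> ((jidx \<Rightarrow> 'z) \<Rightarrow> (jidx \<Rightarrow> 'z)) \<times> (jidx \<Rightarrow> 'z)) set" where
  "KJpart smul d p = Jpart p \<times> (L0 smul d \<inter> glpart p) \<times> Jpart p"

definition is_basis :: "('f::field \<Rightarrow> 'v::ab_group_add \<Rightarrow> 'v) \<Rightarrow> 'v set \<Rightarrow> 'v set \<Rightarrow> bool" where
  "is_basis scale S B \<longleftrightarrow> B \<subseteq> S \<and> \<not> Modules.module.dependent scale B \<and> Modules.module.span scale B = S"

definition CK_hyp :: "('f::field \<Rightarrow> 'z::comm_ring_1 \<Rightarrow> 'z) \<Rightarrow> ('z \<Rightarrow> 'z) \<Rightarrow> bool" where
  "CK_hyp smul d \<longleftrightarrow>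
     (2::'f) \<noteq> 0 \<and> vector_space smul
     \<and> (\<forall>c x y. smul c (x * y) = smul c x * y)
     \<and> (\<forall>x y. d (x + y) = d x + d y) \<and> (\<forall>c x. d (smul c x) = smul c (d x))
     \<and> (\<forall>x y. d (x * y) = d x * y + x * d y)
     \<and> Modules.module.span smul {f * d g | f g. True} = UNIV"

end

theory Submission
  imports Defs
begin

text \<open>
  Dimensions are compared through explicit bases.  If BZ is an F-basis of Z
  and I is a finite index set, the vectors e_i z (i \<in> I, z \<in> BZ) form a basis of the
  Z-valued functions supported on I, and this basis is in bijection with I \<times> BZ.  Hence every
  space that is the injective linear image of such a coordinate space has bases equipotent to
  {..<card I} \<times> BZ; this is the general part of the development.
  J is itself the coordinate space over its 8 basis symbols, and J_0, J_1 are the coordinate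
  spaces over the 4 even, resp. 4 odd symbols.  For K(J) we exhibit an explicit F-linear map
  b \<mapsto> R_b from J into gl(J) with D(a,b) = R_(Phi(a,b)) for homogeneous a, b, and with every
  R_b a combination of such D(a,b); thus L_0 = {L_a + R_b}.  The map (a,b) \<mapsto> L_a + R_b is
  injective (this uses char F \<noteq> 2 and Z delta(Z) = Z) and respects parity, so
  (x,a,b,y) \<mapsto> (x, L_a + R_b, y) is a linear isomorphism from J^4 onto K(J) carrying the
  parity-p part of J^4 onto K(J)_p.  So K(J) is the coordinate space over 4 \<cdot> 8 symbols, its
  homogeneous parts over 4 \<cdot> 4 symbols, and the corollary is cardinal arithmetic.
\<close>

section \<open>Coordinate spaces over a vector space\<close>

definition pw :: "('f \<Rightarrow> 'v \<Rightarrow> 'v) \<Rightarrow> 'f \<Rightarrow> ('i \<Rightarrow> 'v) \<Rightarrow> ('i \<Rightarrow> 'v)" where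
  "pw s c f = (\<lambda>i. s c (f i))"

lemma vector_space_pw: "vector_space s \<Longrightarrow> vector_space (pw s)"
  unfolding vector_space_def pw_def by (auto simp: fun_eq_iff)

definition supp_space :: "'i set \<Rightarrow> ('i \<Rightarrow> 'v::zero) set" where
  "supp_space I = {v. \<forall>i. i \<notin> I \<longrightarrow> v i = 0}"

definition unit_vec :: "'i \<Rightarrow> 'v::zero \<Rightarrow> 'i \<Rightarrow> 'v" where
  "unit_vec i z = (\<lambda>k. if k = i then z else 0)"

definition coord_vectors :: "'i set \<Rightarrow> 'v::zero set \<Rightarrow> ('i \<Rightarrow> 'v) set" where
  "coord_vectors I B = (\<lambda>(i, z). unit_vec i z) ` (I \<times> B)"

lemma sum_apply: "(\<Sum>i\<in>I. f i) k = (\<Sum>i\<in>I. f i k)"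
  by (induction I rule: infinite_finite_induct) auto

lemma (in vector_space) coord_vectors_independent:
  fixes I :: "'i set"
  assumes indep: "\<not> dependent B"
  shows "\<not> module.dependent (pw scale) (coord_vectors I B)"
proof
  interpret V: vector_space "pw scale :: 'a \<Rightarrow> ('i \<Rightarrow> 'b) \<Rightarrow> _"
    by (rule vector_space_pw) unfold_locales
  assume "V.dependent (coord_vectors I B)"
  then obtain i z where iz: "i \<in> I" "z \<in> B"
    and in_span: "unit_vec i z \<in> V.span (coord_vectors I B - {unit_vec i z})"
    unfolding V.dependent_def coord_vectors_def by auto
  \<comment> \<open>all other coordinate vectors have i-th coordinate in span (B - {z}), a subspace condition\<close>
  let ?S = "{v :: 'i \<Rightarrow> 'b. v i \<in> span (B - {z})}"
  have sub: "V.subspace ?S"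
    by (rule V.subspaceI) (auto simp: pw_def intro: span_add span_scale span_zero)
  have "coord_vectors I B - {unit_vec i z} \<subseteq> ?S"
    by (auto simp: coord_vectors_def unit_vec_def span_zero intro: span_base)
  from V.span_minimal[OF this sub] in_span have "z \<in> span (B - {z})"
    by (auto simp: unit_vec_def)
  then show False using indep iz unfolding dependent_def by blast
qed

lemma (in vector_space) coord_vectors_span:
  fixes I :: "'i set"
  assumes spans: "span B = UNIV" and fin: "finite I"
  shows "module.span (pw scale) (coord_vectors I B) = supp_space I"
proof
  interpret V: vector_space "pw scale :: 'a \<Rightarrow> ('i \<Rightarrow> 'b) \<Rightarrow> _"
    by (rule vector_space_pw) unfold_locales
  interpret P: vector_space_pair scale "pw scale :: 'a \<Rightarrow> ('i \<Rightarrow> 'b) \<Rightarrow> _"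
    by unfold_locales
  have "V.subspace (supp_space I)"
    by (rule V.subspaceI) (auto simp: supp_space_def pw_def)
  moreover have "coord_vectors I B \<subseteq> supp_space I"
    by (auto simp: coord_vectors_def supp_space_def unit_vec_def)
  ultimately show "V.span (coord_vectors I B) \<subseteq> supp_space I"
    by (simp add: V.span_minimal)
  show "supp_space I \<subseteq> V.span (coord_vectors I B)"
  proof
    fix v :: "'i \<Rightarrow> 'b" assume v: "v \<in> supp_space I"
    have lin: "Vector_Spaces.linear scale (pw scale) (unit_vec i :: 'b \<Rightarrow> 'i \<Rightarrow> 'b)" for i
      unfolding linear_iff
      using vector_space_axioms V.vector_space_axioms by (auto simp: unit_vec_def pw_def fun_eq_iff)
    have v_sum: "v = (\<Sum>i\<in>I. unit_vec i (v i))"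
      using v fin by (auto simp: fun_eq_iff sum_apply unit_vec_def supp_space_def)
    have "unit_vec i (v i) \<in> V.span (coord_vectors I B)" if "i \<in> I" for i
    proof -
      have "unit_vec i (v i) \<in> unit_vec i ` span B" using spans by auto
      also have "\<dots> = V.span (unit_vec i ` B)" using P.linear_span_image[OF lin] by simp
      also have "\<dots> \<subseteq> V.span (coord_vectors I B)"
        by (rule V.span_mono) (use that in \<open>auto simp: coord_vectors_def\<close>)
      finally show ?thesis .
    qed
    then show "v \<in> V.span (coord_vectors I B)" by (subst v_sum) (rule V.span_sum)
  qed
qed

lemma coord_vectors_eqpoll:
  assumes "0 \<notin> B"
  shows "coord_vectors I B \<approx> I \<times> B"
  unfolding coord_vectors_def
proof (rule inj_on_image_eqpoll_self, rule inj_onI, clarify)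
  fix i z j z' assume "z \<in> B" "z' \<in> B" and eq: "unit_vec i z = unit_vec j z'"
  have "unit_vec i z i = unit_vec j z' i" using eq by simp
  then show "i = j \<and> z = z'"
    using assms \<open>z \<in> B\<close> \<open>z' \<in> B\<close> by (auto simp: unit_vec_def split: if_splits)
qed

lemma (in vector_space) bases_eqpoll:
  assumes "is_basis scale S B" "\<not> dependent C" "span C = S"
  shows "B \<approx> C"
  using bij_if_span_eq_span_bases[of B C] assms unfolding is_basis_def eqpoll_def by auto

lemma basis_of_injective_image:
  fixes s1 :: "'f::field \<Rightarrow> 'a::ab_group_add \<Rightarrow> 'a" and s2 :: "'f \<Rightarrow> 'b::ab_group_add \<Rightarrow> 'b"
  assumes "vector_space s1" "vector_space s2" and lin: "Vector_Spaces.linear s1 s2 f"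
    and indep: "\<not> Modules.module.dependent s1 C" and inj: "inj_on f (Modules.module.span s1 C)"
    and B: "is_basis s2 (f ` Modules.module.span s1 C) B"
  shows "B \<approx> C"
proof -
  interpret vector_space_pair s1 s2 using assms(1,2) by (simp add: vector_space_pair_def)
  have "\<not> vs2.dependent (f ` C)"
    using linear_independent_injective_image[OF lin indep] inj by simp
  moreover have "vs2.span (f ` C) = f ` vs1.span C"
    using linear_span_image[OF lin] by simp
  ultimately have "B \<approx> f ` C" using B vs2.bases_eqpoll by blast
  also have "f ` C \<approx> C"
    by (rule inj_on_image_eqpoll_self, rule inj_on_subset[OF inj vs1.span_superset])
  finally show ?thesis .
qed

lemma basis_of_coordinate_image:
  fixes s :: "'f::field \<Rightarrow> 'z::ab_group_add \<Rightarrow> 'z" and s2 :: "'f \<Rightarrow> 'b::ab_group_add \<Rightarrow> 'b"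
    and I :: "'i set" and f :: "('i \<Rightarrow> 'z) \<Rightarrow> 'b"
  assumes vs: "vector_space s" and BZ: "is_basis s UNIV BZ" and fin: "finite I"
    and "vector_space s2" "Vector_Spaces.linear (pw s) s2 f" "inj_on f (supp_space I)"
    and B: "is_basis s2 (f ` supp_space I) B"
  shows "B \<approx> {..<card I} \<times> BZ"
proof -
  interpret Z: vector_space s by (rule vs)
  have indep: "\<not> Z.dependent BZ" and spans: "Z.span BZ = UNIV"
    using BZ unfolding is_basis_def by auto
  have "B \<approx> coord_vectors I BZ"
    by (rule basis_of_injective_image[OF vector_space_pw[OF vs] assms(4,5)])
       (use Z.coord_vectors_independent[OF indep, of I] Z.coord_vectors_span[OF spans fin] assms(6) B
         in simp_all)
  also have "\<dots> \<approx> I \<times> BZ"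
    using coord_vectors_eqpoll Z.dependent_zero indep by blast
  also have "\<dots> \<approx> {..<card I} \<times> BZ"
    by (rule times_eqpoll_cong) (use fin in \<open>auto simp: eqpoll_iff_finite_card\<close>)
  finally show ?thesis .
qed

lemma basis_of_coordinate_space:
  fixes s :: "'f::field \<Rightarrow> 'z::ab_group_add \<Rightarrow> 'z" and I :: "'i set"
  assumes "vector_space s" "is_basis s UNIV BZ" "finite I" "is_basis (pw s) (supp_space I) B"
  shows "B \<approx> {..<card I} \<times> BZ"
proof -
  interpret V: vector_space "pw s :: 'f \<Rightarrow> ('i \<Rightarrow> 'z) \<Rightarrow> _" by (rule vector_space_pw) fact
  show ?thesis
    by (rule basis_of_coordinate_image[OF assms(1-3) V.vector_space_axioms V.linear_id])
       (use assms(4) in simp_all)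
qed

lemma lessThan_times_eqpoll:
  assumes "B \<approx> {..<n::nat} \<times> C"
  shows "{..<m::nat} \<times> B \<approx> {..<m * n} \<times> C"
proof -
  have "{..<m} \<times> B \<approx> {..<m} \<times> ({..<n} \<times> C)"
    by (rule times_eqpoll_cong[OF eqpoll_refl assms])
  also have "\<dots> \<approx> ({..<m} \<times> {..<n}) \<times> C"
    by (rule eqpoll_sym[OF times_assoc_eqpoll])
  also have "\<dots> \<approx> {..<m * n} \<times> C"
    by (rule times_eqpoll_cong) (auto simp: eqpoll_iff_finite_card card_cartesian_product)
  finally show ?thesis .
qed

section \<open>The multiplication table of J\<close>

lemma all_jidx: "(\<forall>i. P i) \<longleftrightarrow> P One \<and> P W1 \<and> P W2 \<and> P W3 \<and> P X \<and> P X1 \<and> P X2 \<and> P X3"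
  by (metis jidx.exhaust)

text \<open>The product of J in coordinates, read off from the defining table; every computation with
  the product goes through this closed form.\<close>
definition jmulc :: "('z::comm_ring_1 \<Rightarrow> 'z) \<Rightarrow> (jidx \<Rightarrow> 'z) \<Rightarrow> (jidx \<Rightarrow> 'z) \<Rightarrow> (jidx \<Rightarrow> 'z)" where
"jmulc d a b = (\<lambda>k. case k of
     One \<Rightarrow> a One * b One + a W1 * b W1 + a W2 * b W2 - a W3 * b W3 - a X * d (b X)
         + d (a X) * b X
   | W1 \<Rightarrow> a One * b W1 + a W1 * b One - a X * b X1 + a X1 * b X
   | W2 \<Rightarrow> a One * b W2 + a W2 * b One - a X * b X2 + a X2 * b X
   | W3 \<Rightarrow> a One * b W3 + a W3 * b One - a X * b X3 + a X3 * b X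
   | X \<Rightarrow> a One * b X + a X * b One
   | X1 \<Rightarrow> a One * b X1 + d (a W1) * b X + a W2 * b X3 - a W3 * b X2
         + a X * d (b W1) + a X1 * b One - a X2 * b W3 + a X3 * b W2
   | X2 \<Rightarrow> a One * b X2 - a W1 * b X3 + d (a W2) * b X + a W3 * b X1
         + a X * d (b W2) + a X1 * b W3 + a X2 * b One - a X3 * b W1
   | X3 \<Rightarrow> a One * b X3 - a W1 * b X2 + a W2 * b X1 + d (a W3) * b X
         + a X * d (b W3) + a X1 * b W2 - a X2 * b W1 + a X3 * b One)"

lemma jmul_table: "jmul d a b = jmulc d a b"
proof
  fix k
  show "jmul d a b k = jmulc d a b k"
    unfolding jmul_def jall_def jmulc_def by (cases k) (simp_all add: jsing_def algebra_simps)
qed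

lemma UNIV_jidx: "(UNIV :: jidx set) = {One, W1, W2, W3, X, X1, X2, X3}"
  using all_jidx[of "\<lambda>i. i \<in> {One, W1, W2, W3, X, X1, X2, X3}"] by auto

lemma finite_jidx_set [simp]: "finite (I :: jidx set)"
  by (rule finite_subset[OF subset_UNIV]) (simp add: UNIV_jidx)

lemma card_jodd: "card {i. jodd i = p} = 4"
proof -
  have "jodd i = p \<longleftrightarrow> i \<in> (if p then {X, X1, X2, X3} else {One, W1, W2, W3})" for i
    by (cases i; cases p) simp_all
  then have "{i. jodd i = p} = (if p then {X, X1, X2, X3} else {One, W1, W2, W3})"
    by blast
  then show ?thesis by simp
qed

lemma jhom_even: "jhom False a \<longleftrightarrow> a X = 0 \<and> a X1 = 0 \<and> a X2 = 0 \<and> a X3 = 0"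
  unfolding jhom_def all_jidx by simp

lemma jhom_odd: "jhom True a \<longleftrightarrow> a One = 0 \<and> a W1 = 0 \<and> a W2 = 0 \<and> a W3 = 0"
  unfolding jhom_def all_jidx by simp

lemma Jpart_supp_space: "Jpart p = supp_space {i. jodd i = p}"
  by (auto simp: Jpart_def supp_space_def jhom_def)

lemma jhom_jsing [simp]: "jhom p (jsing i u) \<longleftrightarrow> jodd i = p \<or> u = 0"
  by (auto simp: jhom_def jsing_def)

lemma jsing_decomp:
  fixes b :: "jidx \<Rightarrow> 'z::comm_monoid_add"
  shows "b = jsing One (b One) + jsing W1 (b W1) + jsing W2 (b W2) + jsing W3 (b W3)
     + jsing X (b X) + jsing X1 (b X1) + jsing X2 (b X2) + jsing X3 (b X3)"
  unfolding fun_eq_iff all_jidx by (simp add: jsing_def)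

section \<open>The inner derivations of J\<close>

locale ring_derivation =
  fixes d :: "'z::comm_ring_1 \<Rightarrow> 'z"
  assumes d_add: "d (x + y) = d x + d y" and d_mult: "d (x * y) = d x * y + x * d y"
begin

lemma d_zero [simp]: "d 0 = 0"
  using d_add[of 0 0] by simp

lemma d_minus [simp]: "d (- x) = - d x"
  using d_add[of x "- x"] by (simp add: eq_neg_iff_add_eq_0 add.commute)

lemma d_diff [simp]: "d (x - y) = d x - d y"
  using d_add[of x "- y"] by simp

lemma d_one [simp]: "d 1 = 0"
  using d_mult[of 1 1] by simp

end

text \<open>R_b is an explicit operator on J depending additively on b, and Phi(a,b) is the element
  with D(a,b) = R_(Phi(a,b)).  Together with the converse below, they identify Inder(J) with
  {R_b | b \<in> J}.\<close>
definition Rop :: "('z::comm_ring_1 \<Rightarrow> 'z) \<Rightarrow> (jidx \<Rightarrow> 'z) \<Rightarrow> (jidx \<Rightarrow> 'z) \<Rightarrow> (jidx \<Rightarrow> 'z)" where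
"Rop d b c = (\<lambda>k. case k of
     One \<Rightarrow> - (2 * b One * d (c One)) + b X * c X - b X1 * c X1 - b X2 * c X2
         + b X3 * c X3
   | W1 \<Rightarrow> - (2 * b One * d (c W1)) - b W2 * c W3 + b W3 * c W2 - b X1 * d (c X)
         + d (b X1) * c X + b X2 * c X3 - b X3 * c X2
   | W2 \<Rightarrow> - (2 * b One * d (c W2)) - b W1 * c W3 - b W3 * c W1 - b X1 * c X3
         - b X2 * d (c X) + d (b X2) * c X + b X3 * c X1
   | W3 \<Rightarrow> - (2 * b One * d (c W3)) - b W1 * c W2 - b W2 * c W1 - b X1 * c X2
         + b X2 * c X1 - b X3 * d (c X) + d (b X3) * c X
   | X \<Rightarrow> - (2 * b One * d (c X)) + d (b One) * c X - b X1 * c W1 - b X2 * c W2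
         + b X3 * c W3
   | X1 \<Rightarrow> - (2 * b One * d (c X1)) - d (b One) * c X1 + d (b W1) * c X - b W2 * c X3
         + b W3 * c X2 - b X * c W1 - b X1 * d (c One) + b X2 * d (c W3) - b X3 * d (c W2)
   | X2 \<Rightarrow> - (2 * b One * d (c X2)) - d (b One) * c X2 - b W1 * c X3 - d (b W2) * c X
         - b W3 * c X1 - b X * c W2 - b X1 * d (c W3) - b X2 * d (c One) + b X3 * d (c W1)
   | X3 \<Rightarrow> - (2 * b One * d (c X3)) - d (b One) * c X3 - b W1 * c X2 - b W2 * c X1
         - d (b W3) * c X - b X * c W3 - b X1 * d (c W2) + b X2 * d (c W1) - b X3 * d (c One))"

definition Phi :: "('z::comm_ring_1 \<Rightarrow> 'z) \<Rightarrow> (jidx \<Rightarrow> 'z) \<Rightarrow> (jidx \<Rightarrow> 'z) \<Rightarrow> (jidx \<Rightarrow> 'z)" where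
"Phi d a b = (\<lambda>k. case k of
     One \<Rightarrow> a X * b X
   | W1 \<Rightarrow> a W2 * b W3 - a W3 * b W2 + (a X * b X1 + a X1 * b X)
   | W2 \<Rightarrow> a W1 * b W3 - a W3 * b W1 - (a X * b X2 + a X2 * b X)
   | W3 \<Rightarrow> a W1 * b W2 - a W2 * b W1 - (a X * b X3 + a X3 * b X)
   | X \<Rightarrow> d (a One) * b X - a X * d (b One) + (a W1 * b X1 - a X1 * b W1)
         + (a W2 * b X2 - a X2 * b W2) - (a W3 * b X3 - a X3 * b W3)
   | X1 \<Rightarrow> a W1 * b X - a X * b W1
   | X2 \<Rightarrow> a W2 * b X - a X * b W2
   | X3 \<Rightarrow> a W3 * b X - a X * b W3)"

lemma (in ring_derivation) Dop_eq_Rop_Phi: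
  assumes "jhom p a" "jhom q b"
  shows "Dop d (p \<and> q) a b = Rop d (Phi d a b)"
proof (intro ext)
  fix c k
  show "Dop d (p \<and> q) a b c k = Rop d (Phi d a b) c k"
    using assms
    by (cases p; cases q; cases k)
       (simp_all add: Dop_def jmul_table jmulc_def Rop_def Phi_def jhom_even jhom_odd
          d_add d_mult algebra_simps)
qed

lemma (in ring_derivation) Phi_jsing:
  "Phi d (jsing X u) (jsing X 1) = jsing One u"
  "Phi d (jsing W2 u) (jsing W3 1) = jsing W1 u"
  "Phi d (jsing W1 u) (jsing W3 1) = jsing W2 u"
  "Phi d (jsing W1 u) (jsing W2 1) = jsing W3 u"
  "Phi d (jsing W1 u) (jsing X1 1) = jsing X u"
  "Phi d (jsing W1 u) (jsing X 1) = jsing X1 u"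
  "Phi d (jsing W2 u) (jsing X 1) = jsing X2 u"
  "Phi d (jsing W3 u) (jsing X 1) = jsing X3 u"
  by (rule ext; simp add: Phi_def jsing_def split: jidx.split)+

lemma (in ring_derivation) Rop_jsing_as_Dop:
  "Rop d (jsing One u) = Dop d (True \<and> True) (jsing X u) (jsing X 1)"
  "Rop d (jsing W1 u) = Dop d (False \<and> False) (jsing W2 u) (jsing W3 1)"
  "Rop d (jsing W2 u) = Dop d (False \<and> False) (jsing W1 u) (jsing W3 1)"
  "Rop d (jsing W3 u) = Dop d (False \<and> False) (jsing W1 u) (jsing W2 1)"
  "Rop d (jsing X u) = Dop d (False \<and> True) (jsing W1 u) (jsing X1 1)"
  "Rop d (jsing X1 u) = Dop d (False \<and> True) (jsing W1 u) (jsing X 1)"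
  "Rop d (jsing X2 u) = Dop d (False \<and> True) (jsing W2 u) (jsing X 1)"
  "Rop d (jsing X3 u) = Dop d (False \<and> True) (jsing W3 u) (jsing X 1)"
  by (subst Dop_eq_Rop_Phi; simp add: Phi_jsing)+

section \<open>The degree-zero part L_0 of K(J)\<close>

lemma sJ_pw: "sJ s = pw s"
  by (simp add: fun_eq_iff sJ_def pw_def)

lemma sG_pw: "sG s = pw (sJ s)"
  by (simp add: fun_eq_iff sG_def pw_def)

lemma vector_space_sK: "vector_space s \<Longrightarrow> vector_space (sK s)"
  unfolding vector_space_def sK_def sJ_def sG_def
  by (auto simp: fun_eq_iff split: prod.split)

definition LR :: "('z::comm_ring_1 \<Rightarrow> 'z) \<Rightarrow> (jidx \<Rightarrow> 'z) \<Rightarrow> (jidx \<Rightarrow> 'z)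
                  \<Rightarrow> (jidx \<Rightarrow> 'z) \<Rightarrow> (jidx \<Rightarrow> 'z)" where
  "LR d a b = jmul d a + Rop d b"

locale ck =
  fixes smul :: "'f::field \<Rightarrow> 'z::comm_ring_1 \<Rightarrow> 'z" and d :: "'z \<Rightarrow> 'z"
  assumes hyp: "CK_hyp smul d"
begin

lemma vector_space_Z: "vector_space smul"
  and scale_mult: "smul c (x * y) = smul c x * y"
  and d_scale: "d (smul c x) = smul c (d x)"
  and two_neq_zero: "(2::'f) \<noteq> 0"
  and span_Z_dZ: "Modules.module.span smul {f * d g | f g. True} = UNIV"
  using hyp unfolding CK_hyp_def by blast+

sublocale ring_derivation d
  using hyp unfolding CK_hyp_def ring_derivation_def by blast

sublocale Z: vector_space smul by (rule vector_space_Z)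
sublocale J: vector_space "sJ smul" unfolding sJ_pw by (rule vector_space_pw[OF vector_space_Z])
sublocale G: vector_space "sG smul"
  unfolding sG_pw sJ_pw by (rule vector_space_pw[OF vector_space_pw[OF vector_space_Z]])
sublocale K: vector_space "sK smul" by (rule vector_space_sK[OF vector_space_Z])

text \<open>Scalars act on Z by multiplication with a d-constant element; this makes the product
  and the operators R_b F-linear.\<close>
lemma scalar_as_mult:
  obtains k where "\<And>x. smul c x = k * x" "\<And>x. d (k * x) = k * d x" "\<And>x. d (x * k) = k * d x"
proof (rule that)
  show as_mult: "smul c x = smul c 1 * x" for x
    using scale_mult[of c 1 x] by simp
  show "d (smul c 1 * x) = smul c 1 * d x" for x
    using d_scale[of c x] by (simp only: as_mult[of x] as_mult[of "d x"])
  then show "d (x * smul c 1) = smul c 1 * d x" for x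
    by (simp add: mult.commute)
qed

lemma jmul_add_left: "jmul d (a + a') = jmul d a + jmul d a'"
  by (intro ext) (simp add: jmul_table jmulc_def d_add algebra_simps split: jidx.split)

lemma jmul_scale_left: "jmul d (sJ smul c a) = sG smul c (jmul d a)"
proof -
  obtain k where k: "\<And>x. smul c x = k * x" "\<And>x. d (k * x) = k * d x" "\<And>x. d (x * k) = k * d x"
    using scalar_as_mult by blast
  show ?thesis
    by (intro ext) (simp add: k jmul_table jmulc_def sJ_def sG_def algebra_simps split: jidx.split)
qed

lemma jmul_zero_left: "jmul d 0 = 0"
  by (intro ext) (simp add: jmul_table jmulc_def split: jidx.split)

lemma Rop_add: "Rop d (b + b') = Rop d b + Rop d b'"
  by (intro ext) (simp add: Rop_def d_add algebra_simps split: jidx.split)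

lemma Rop_scale: "Rop d (sJ smul c b) = sG smul c (Rop d b)"
proof -
  obtain k where k: "\<And>x. smul c x = k * x" "\<And>x. d (k * x) = k * d x" "\<And>x. d (x * k) = k * d x"
    using scalar_as_mult by blast
  show ?thesis
    by (intro ext) (simp add: k Rop_def sJ_def sG_def algebra_simps split: jidx.split)
qed

lemma Rop_zero: "Rop d 0 = 0"
  by (intro ext) (simp add: Rop_def split: jidx.split)

lemma LR_add: "LR d (a + a') (b + b') = LR d a b + LR d a' b'"
  by (simp add: LR_def jmul_add_left Rop_add algebra_simps)

lemma LR_scale: "LR d (sJ smul c a) (sJ smul c b) = sG smul c (LR d a b)"
  by (simp add: LR_def jmul_scale_left Rop_scale G.scale_right_distrib)

lemma LR_subspace: "G.subspace {LR d a b | a b. True}"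
proof (rule G.subspaceI)
  have "0 = LR d 0 0" using LR_add[of 0 0 0 0] by simp
  then show "0 \<in> {LR d a b | a b. True}" by blast
next
  fix x y assume "x \<in> {LR d a b | a b. True}" "y \<in> {LR d a b | a b. True}"
  then obtain a b a' b' where "x = LR d a b" "y = LR d a' b'" by blast
  then have "x + y = LR d (a + a') (b + b')" by (simp add: LR_add)
  then show "x + y \<in> {LR d a b | a b. True}" by blast
next
  fix c x assume "x \<in> {LR d a b | a b. True}"
  then obtain a b where "x = LR d a b" by blast
  then have "sG smul c x = LR d (sJ smul c a) (sJ smul c b)" by (simp add: LR_scale)
  then show "sG smul c x \<in> {LR d a b | a b. True}" by blast
qed

lemma L0_eq: "L0 smul d = {LR d a b | a b. True}"
proof
  have jmul_as_LR: "jmul d a = LR d a 0" for a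
    by (simp add: LR_def Rop_zero)
  have Dop_as_LR: "Dop d (p \<and> q) a b = LR d 0 (Phi d a b)" if "jhom p a" "jhom q b" for p q a b
    by (simp add: LR_def jmul_zero_left Dop_eq_Rop_Phi[OF that])
  show "L0 smul d \<subseteq> {LR d a b | a b. True}"
    unfolding L0_def
    by (rule G.span_minimal[OF _ LR_subspace]) (use jmul_as_LR Dop_as_LR in blast)
next
  let ?gens = "{jmul d a | a. True}
    \<union> {Dop d (p \<and> q) a b | p q (a :: jidx \<Rightarrow> 'z) (b :: jidx \<Rightarrow> 'z). jhom p a \<and> jhom q b}"
  have Dop_in: "Dop d (p \<and> q) a b \<in> G.span ?gens" if "jhom p a" "jhom q b" for p q a b
    by (rule G.span_base) (use that in blast)
  have Rop_jsing_in: "Rop d (jsing i u) \<in> G.span ?gens" for i u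
    by (cases i; simp only: Rop_jsing_as_Dop; rule Dop_in; simp)
  have "Rop d b \<in> G.span ?gens" for b
    by (subst jsing_decomp) (simp only: Rop_add, (rule G.span_add Rop_jsing_in)+)
  moreover have "jmul d a \<in> G.span ?gens" for a by (rule G.span_base) blast
  ultimately show "{LR d a b | a b. True} \<subseteq> L0 smul d"
    unfolding L0_def LR_def using G.span_add by blast
qed

text \<open>Values of L_a + R_b on a few basis vectors; they recover all coordinates of a and b.\<close>
lemma LR_eval:
  "LR d a b (jsing One 1) = a"
  "LR d a b (jsing W2 1) W3 = - b W1"
  "LR d a b (jsing W1 1) W3 = - b W2"
  "LR d a b (jsing W2 1) W1 = b W3"
  "LR d a b (jsing W1 1) X1 = - b X"
  "LR d a b (jsing W1 1) X = - b X1"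
  "LR d a b (jsing W2 1) X = - b X2"
  "LR d a b (jsing W3 1) X = b X3"
  "LR d a b (jsing One h) One = a One * h - 2 * b One * d h"
  by (simp_all add: LR_def jmul_table jmulc_def Rop_def jsing_def fun_eq_iff split: jidx.split)

text \<open>Since Z d(Z) = Z and 2 is invertible, no nonzero u satisfies 2 u d(h) = 0 for all h.\<close>
lemma annihilator_2dZ:
  assumes h: "\<And>h. 2 * u * d h = 0"
  shows "u = 0"
proof -
  have ann: "u * d h = 0" for h
  proof -
    have "smul 2 (u * d h) = u * d h + u * d h"
      using Z.scale_left_distrib[of 1 1 "u * d h"] by (simp add: one_add_one)
    also have "\<dots> = 2 * u * d h" by (simp add: algebra_simps mult_2)
    finally have "smul 2 (u * d h) = 0" using h by simp
    then show ?thesis using two_neq_zero by simp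
  qed
  have "Z.subspace {v. u * v = 0}"
    by (rule Z.subspaceI)
       (auto simp: distrib_left, metis scale_mult mult.commute Z.scale_zero_right)
  moreover have "{f * d g | f g. True} \<subseteq> {v. u * v = 0}"
    using ann by (auto simp: algebra_simps)
  ultimately have "1 \<in> {v. u * v = 0}"
    using Z.span_minimal span_Z_dZ by blast
  then show ?thesis by simp
qed

lemma LR_eq_0:
  assumes "LR d a b = 0"
  shows "a = 0 \<and> b = 0"
proof -
  have a: "a = 0" using LR_eval(1)[of a b] assms by simp
  have "2 * b One * d h = 0" for h
    using LR_eval(9)[of a b h] assms a by simp
  then have "b One = 0" by (rule annihilator_2dZ)
  with LR_eval(2-8)[of a b] assms have "b = 0"
    by (simp add: fun_eq_iff all_jidx)
  with a show ?thesis by simp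
qed

lemma LR_glpart_iff: "LR d a b \<in> glpart p \<longleftrightarrow> jhom p a \<and> jhom p b"
proof
  assume ab: "jhom p a \<and> jhom p b"
  show "LR d a b \<in> glpart p"
    unfolding glpart_def
  proof (intro CollectI allI impI)
    fix q and c :: "jidx \<Rightarrow> 'z" assume "jhom q c"
    with ab show "jhom (q \<noteq> p) (LR d a b c)"
      by (cases p; cases q) (simp_all add: jhom_even jhom_odd LR_def jmul_table jmulc_def Rop_def)
  qed
next
  assume "LR d a b \<in> glpart p"
  then have maps: "jhom (q \<noteq> p) (LR d a b c)" if "jhom q c" for q c
    using that unfolding glpart_def by blast
  \<comment> \<open>the coordinates of a and b are read off from values on even basis vectors\<close>
  have even: "jhom False (jsing i u)" if "i \<in> {One, W1, W2, W3}" for i and u :: 'z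
    using that by auto
  have a: "jhom p a" using maps[OF even[of One 1]] LR_eval(1)[of a b] by simp
  have b: "jhom p b"
  proof (cases p)
    case True
    have "b W1 = 0" "b W2 = 0" "b W3 = 0"
      using maps[OF even[of W1 1]] maps[OF even[of W2 1]] LR_eval(2-4)[of a b] True
      by (simp_all add: jhom_odd)
    moreover have "2 * b One * d h = 0" for h
      using maps[OF even[of One h]] LR_eval(9)[of a b h] a True by (simp add: jhom_odd)
    then have "b One = 0" by (rule annihilator_2dZ)
    ultimately show ?thesis using True by (simp add: jhom_odd)
  next
    case False
    then show ?thesis
      using maps[OF even[of W1 1]] maps[OF even[of W2 1]] maps[OF even[of W3 1]] LR_eval(5-8)[of a b]
      by (simp add: jhom_even)
  qed
  from a b show "jhom p a \<and> jhom p b" ..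
qed

lemma L0_glpart: "L0 smul d \<inter> glpart p = {LR d a b | a b. a \<in> Jpart p \<and> b \<in> Jpart p}"
  unfolding L0_eq Jpart_def using LR_glpart_iff by blast

end

section \<open>K(J) as the coordinate space J^4\<close>

text \<open>The linear map J^4 \<rightarrow> K(J), (x, a, b, y) \<mapsto> (x, L_a + R_b, y); an element of J^4 is a
  function on {..<4} \<times> jidx.\<close>
definition Kmap :: "('z::comm_ring_1 \<Rightarrow> 'z) \<Rightarrow> (nat \<times> jidx \<Rightarrow> 'z)
     \<Rightarrow> (jidx \<Rightarrow> 'z) \<times> ((jidx \<Rightarrow> 'z) \<Rightarrow> (jidx \<Rightarrow> 'z)) \<times> (jidx \<Rightarrow> 'z)" where
  "Kmap d v = (\<lambda>i. v (0, i), LR d (\<lambda>i. v (1, i)) (\<lambda>i. v (2, i)), \<lambda>i. v (3, i))"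

lemma supp_space_UNIV [simp]: "supp_space UNIV = UNIV"
  by (simp add: supp_space_def)

lemma Kmap_image:
  fixes d :: "'z::comm_ring_1 \<Rightarrow> 'z"
  shows "Kmap d ` supp_space ({..<4} \<times> I)
     = supp_space I \<times> {LR d a b | a b. a \<in> supp_space I \<and> b \<in> supp_space I} \<times> supp_space I"
  (is "_ = ?T")
proof
  show "Kmap d ` supp_space ({..<4} \<times> I) \<subseteq> ?T"
  proof (rule image_subsetI)
    fix v :: "nat \<times> jidx \<Rightarrow> 'z" assume "v \<in> supp_space ({..<4} \<times> I)"
    then have "(\<lambda>i. v (k, i)) \<in> supp_space I" if "k < 4" for k
      using that by (auto simp: supp_space_def)
    from this[of 0] this[of 1] this[of 2] this[of 3] show "Kmap d v \<in> ?T"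
      unfolding Kmap_def by auto
  qed
  show "?T \<subseteq> Kmap d ` supp_space ({..<4} \<times> I)"
  proof (clarify)
    fix x a b y :: "jidx \<Rightarrow> 'z" assume supp: "x \<in> supp_space I" "a \<in> supp_space I" "b \<in> supp_space I" "y \<in> supp_space I"
    define v :: "nat \<times> jidx \<Rightarrow> 'z" where
      "v = (\<lambda>(k, i). if k = 0 then x i else if k = 1 then a i else if k = 2 then b i
                     else if k = 3 then y i else 0)"
    have "v \<in> supp_space ({..<4} \<times> I)"
      using supp by (auto simp: v_def supp_space_def)
    moreover have "Kmap d v = (x, LR d a b, y)"
      by (simp add: Kmap_def v_def)
    ultimately show "(x, LR d a b, y) \<in> Kmap d ` supp_space ({..<4} \<times> I)"
      by (metis image_eqI)
  qed
qed

context ck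
begin

lemma Kmap_linear: "Vector_Spaces.linear (pw smul) (sK smul) (Kmap d)"
  unfolding linear_iff
proof (intro conjI allI)
  show "vector_space (pw smul :: 'f \<Rightarrow> (nat \<times> jidx \<Rightarrow> 'z) \<Rightarrow> _)"
    by (rule vector_space_pw[OF vector_space_Z])
  show "vector_space (sK smul)" by (rule K.vector_space_axioms)
  show "Kmap d (v + w) = Kmap d v + Kmap d w" for v w :: "nat \<times> jidx \<Rightarrow> 'z"
    using LR_add[of "\<lambda>i. v (1, i)" "\<lambda>i. w (1, i)" "\<lambda>i. v (2, i)" "\<lambda>i. w (2, i)"]
    by (simp add: Kmap_def plus_fun_def)
  show "Kmap d (pw smul c v) = sK smul c (Kmap d v)" for c and v :: "nat \<times> jidx \<Rightarrow> 'z"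
    using LR_scale[of c "\<lambda>i. v (1, i)" "\<lambda>i. v (2, i)"]
    by (simp add: Kmap_def pw_def sK_def sJ_def)
qed

lemma Kmap_inj: "inj_on (Kmap d) (supp_space ({..<4} \<times> I))"
proof -
  interpret P: vector_space_pair "pw smul :: 'f \<Rightarrow> (nat \<times> jidx \<Rightarrow> 'z) \<Rightarrow> _" "sK smul"
    by (simp add: vector_space_pair_def vector_space_pw[OF vector_space_Z] K.vector_space_axioms)
  have sub: "P.vs1.subspace (supp_space ({..<4} \<times> I))"
    by (rule P.vs1.subspaceI) (auto simp: supp_space_def pw_def)
  have "v = 0" if "v \<in> supp_space ({..<4} \<times> I)" "Kmap d v = 0" for v
  proof -
    have outer: "(\<lambda>i. v (0, i)) = 0" "(\<lambda>i. v (3, i)) = 0"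
      and middle: "LR d (\<lambda>i. v (1, i)) (\<lambda>i. v (2, i)) = 0"
      using that(2) by (simp_all add: Kmap_def zero_prod_def)
    have "v (k, i) = 0" if "k < 4" for k i
    proof -
      have "k = 0 \<or> k = 1 \<or> k = 2 \<or> k = 3" using that by auto
      then show ?thesis
        using fun_cong[OF outer(1), of i] fun_cong[OF outer(2), of i] LR_eq_0[OF middle]
        by (auto simp: fun_eq_iff)
    qed
    with that(1) show "v = 0"
      by (auto simp: fun_eq_iff supp_space_def)
  qed
  then show ?thesis
    using P.linear_inj_on_iff_eq_0[OF Kmap_linear sub] by blast
qed

lemma Kmap_onto_KJ: "Kmap d ` supp_space ({..<4} \<times> UNIV) = KJ smul d"
  by (simp add: Kmap_image KJ_def L0_eq)

lemma Kmap_onto_KJpart: "Kmap d ` supp_space ({..<4} \<times> {i. jodd i = p}) = KJpart smul d p"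
  by (simp add: Kmap_image KJpart_def L0_glpart Jpart_supp_space)

lemma J_basis_eqpoll:
  fixes I :: "jidx set"
  assumes "is_basis smul UNIV BZ" "is_basis (sJ smul) (supp_space I) B"
  shows "B \<approx> {..<card I} \<times> BZ"
  using basis_of_coordinate_space[OF vector_space_Z assms(1) finite_jidx_set] assms(2) by (simp add: sJ_pw)

lemma K_basis_eqpoll:
  fixes I :: "jidx set"
  assumes "is_basis smul UNIV BZ" "is_basis (sK smul) (Kmap d ` supp_space ({..<4} \<times> I)) B"
  shows "B \<approx> {..<4 * card I} \<times> BZ"
  using basis_of_coordinate_image[OF vector_space_Z assms(1) _ K.vector_space_axioms Kmap_linear
      Kmap_inj assms(2)]
  by (simp add: card_cartesian_product)

end

theorem corollary4p6:
  fixes smul :: "'f::field \<Rightarrow> 'z::comm_ring_1 \<Rightarrow> 'z" and d :: "'z \<Rightarrow> 'z"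
  assumes "CK_hyp smul d"
    and "is_basis smul UNIV BZ"
    and "is_basis (sJ smul) UNIV BJ"
    and "is_basis (sJ smul) (Jpart False) BJ0"
    and "is_basis (sJ smul) (Jpart True) BJ1"
    and "is_basis (sK smul) (KJ smul d) BK"
    and "is_basis (sK smul) (KJpart smul d False) BK0"
    and "is_basis (sK smul) (KJpart smul d True) BK1"
  shows "BK \<approx> {..<(4::nat)} \<times> BJ \<and> {..<(4::nat)} \<times> BJ \<approx> {..<(32::nat)} \<times> BZ
       \<and> BK0 \<approx> BK1 \<and> BK1 \<approx> {..<(4::nat)} \<times> BJ0 \<and> {..<(4::nat)} \<times> BJ0 \<approx> {..<(4::nat)} \<times> BJ1
       \<and> {..<(4::nat)} \<times> BJ1 \<approx> {..<(16::nat)} \<times> BZ"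
proof -
  interpret ck smul d by (rule ck.intro) fact
  have card_UNIV: "card (UNIV :: jidx set) = 8" by (simp add: UNIV_jidx)
  have J: "BJ \<approx> {..<8::nat} \<times> BZ"
    using J_basis_eqpoll[OF assms(2), of UNIV] assms(3) card_UNIV by simp
  have J_part: "B \<approx> {..<4::nat} \<times> BZ" if "is_basis (sJ smul) (Jpart p) B" for p B
    using J_basis_eqpoll[OF assms(2), of "{i. jodd i = p}"] that card_jodd
    by (simp add: Jpart_supp_space)
  have K: "BK \<approx> {..<32::nat} \<times> BZ"
    using K_basis_eqpoll[OF assms(2), of UNIV] assms(6) Kmap_onto_KJ card_UNIV by simp
  have K_part: "B \<approx> {..<16::nat} \<times> BZ" if "is_basis (sK smul) (KJpart smul d p) B" for p B
    using K_basis_eqpoll[OF assms(2), of "{i. jodd i = p}"] that Kmap_onto_KJpart card_jodd by simp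
  have "{..<4::nat} \<times> BJ \<approx> {..<32::nat} \<times> BZ"
    and "{..<4::nat} \<times> BJ0 \<approx> {..<16::nat} \<times> BZ" "{..<4::nat} \<times> BJ1 \<approx> {..<16::nat} \<times> BZ"
    using lessThan_times_eqpoll[OF J, of 4] lessThan_times_eqpoll[OF J_part[OF assms(4)], of 4]
      lessThan_times_eqpoll[OF J_part[OF assms(5)], of 4] by simp_all
  with K K_part[OF assms(7)] K_part[OF assms(8)] show ?thesis
    by (meson eqpoll_sym eqpoll_trans)
qed

end
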